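(* Let $b>1$, let $(p,R,I)$ be proper with $I$ non-empty, let $k$ be the greatest divisor of $p$ coprime with $b$ and $d=p/k$. Then: (a) for all distinct $x,x'\in\{0,\ldots,k-1\}$, the states $(xd,\bot)$ and $(x'd,\bot)$ of $\mathcal{C}_{R,p,I}$ are not Nerode-equivalent; (b) the states of $\mathcal{C}_{R,p,I}$ that belong to $0$-circuits are pairwise Nerode-inequivalent; (c) the initial state of $\mathcal{C}_{R,p,I}$ is not Nerode-equivalent to any other state.
   Context: $A_b=\{0,\ldots,b-1\}$. Given $p\ge1$, $R\subseteq\{0,\ldots,p-1\}$, finite $I\subseteq\mathbb{N}$, let $S=(R+p\mathbb{N})\oplus I$ ($\oplus$ = symmetric difference). $(p,R,I)$ is proper if $p$ is the smallest positive integer for which $S=(R'+p\mathbb{N})\oplus I'$ for some $R'\subseteq\{0,\ldots,p-1\}$ and finite $I'$. $\mathcal{A}_{R,p}$: states $\{0,\ldots,p-1\}$, initial $0$, final $R$, transitions $n\xrightarrow{a}(nb+a)\bmod p$. With $m=\max I$, $\mathcal{B}_I$: states $\{0,\ldots,m\}\cup\{\bot\}$, initial $0$, final $I$, transitions $i\xrightarrow{a}ib+a$ if $ib+a\le m$, else $i\xrightarrow{a}\bot$, and $\bot\xrightarrow{a}\bot$. $\mathcal{C}_{R,p,I}$ is the accessible part of the product of $\mathcal{A}_{R,p}$ and $\mathcal{B}_I$ (initial state $(0,0)$, componentwise transitions), with $(s,t)$ final iff exactly one of $s\in R$, $t\in I$ holds. Two states are Nerode-equivalent if for every word $u$, the states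 reached from them by reading $u$ are both final or both non-final. A $0$-circuit is a circuit all of whose transitions are labelled $0$. *)

theory Defs
  imports Main
begin

definition alph :: "nat \<Rightarrow> nat set" where
  "alph b = {0..<b}"

definition symdiff :: "'a set \<Rightarrow> 'a set \<Rightarrow> 'a set" where
  "symdiff A B = (A - B) \<union> (B - A)"

definition perset :: "nat \<Rightarrow> nat set \<Rightarrow> nat set \<Rightarrow> nat set" where
  "perset p R I = symdiff {r + p * n | r n. r \<in> R} I"

definition proper :: "nat \<Rightarrow> nat set \<Rightarrow> nat set \<Rightarrow> bool" where
  "proper p R I \<longleftrightarrow> p \<ge> 1 \<and> R \<subseteq> {0..<p} \<and> finite I \<and>
     (\<forall>p'. 0 < p' \<and> p' < p \<longrightarrow>
        \<not> (\<exists>R' I'. R' \<subseteq> {0..<p'} \<and> finite I' \<and> perset p R I = perset p' R' I'))"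

(* states of the product automaton: (s, t) with t = None standing for \<bottom> *)
type_synonym cstate = "nat \<times> nat option"

definition deltaB :: "nat \<Rightarrow> nat set \<Rightarrow> nat option \<Rightarrow> nat \<Rightarrow> nat option" where
  "deltaB b I t a = (case t of None \<Rightarrow> None
     | Some i \<Rightarrow> (if i * b + a \<le> Max I then Some (i * b + a) else None))"

definition deltaC :: "nat \<Rightarrow> nat \<Rightarrow> nat set \<Rightarrow> cstate \<Rightarrow> nat \<Rightarrow> cstate" where
  "deltaC b p I q a = ((fst q * b + a) mod p, deltaB b I (snd q) a)"

definition runC :: "nat \<Rightarrow> nat \<Rightarrow> nat set \<Rightarrow> cstate \<Rightarrow> nat list \<Rightarrow> cstate" where
  "runC b p I q u = foldl (deltaC b p I) q u"

definition initC :: cstate where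
  "initC = (0, Some 0)"

definition finalC :: "nat set \<Rightarrow> nat set \<Rightarrow> cstate \<Rightarrow> bool" where
  "finalC R I q \<longleftrightarrow> ((fst q \<in> R) \<noteq> (snd q \<in> Some ` I))"

definition statesC :: "nat \<Rightarrow> nat \<Rightarrow> nat set \<Rightarrow> cstate set" where
  "statesC b p I = {runC b p I initC u | u. u \<in> lists (alph b)}"

definition nerode_equiv :: "nat \<Rightarrow> nat \<Rightarrow> nat set \<Rightarrow> nat set \<Rightarrow> cstate \<Rightarrow> cstate \<Rightarrow> bool" where
  "nerode_equiv b p R I q q' \<longleftrightarrow>
     (\<forall>u \<in> lists (alph b). finalC R I (runC b p I q u) = finalC R I (runC b p I q' u))"

definition on_zero_circuit :: "nat \<Rightarrow> nat \<Rightarrow> nat set \<Rightarrow> cstate \<Rightarrow> bool" where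
  "on_zero_circuit b p I q \<longleftrightarrow> (\<exists>n>0. runC b p I q (replicate n 0) = q)"

end

theory Submission
  imports Defs "HOL-Number_Theory.Cong"
begin

text \<open>
  Reading a word u from a state (s, t) of C lands in (s b^|u| + [u]) mod p in the first
  component, where [u] is the value of u in base b; from \<bottom> the second component stays \<bottom>.
  Nerode equivalence of two \<bottom>-states (s, \<bottom>) and (s', \<bottom>) therefore says that the residue
  predicate x mod p \<in> R takes the same values on all translates of s b^L and s' b^L. As p is
  the least period of R + pN (properness), any two shifts under which this predicate agrees
  are congruent modulo p, so s b^L \<equiv> s' b^L (mod p).

  (a) follows since b^L is invertible modulo k. (b): a state of C on a 0-circuit is either
  the initial state or a \<bottom>-state (s, \<bottom>) with s b^N \<equiv> s (mod p) for some N > 0, and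
  choosing L a common multiple of these N makes multiplication by b^L the identity on both
  states. (c): if the initial state were equivalent to the state reached by a word of value
  n > 0, then x \<mapsto> (x mod p \<in> R) \<noteq> (x \<in> I) would agree at v and n b^L + v for all v < b^L; at
  v = max I and v = max I + p this value differs, whereas at n b^L + v, beyond I, it does not.
\<close>

definition word_value :: "nat \<Rightarrow> nat list \<Rightarrow> nat" where
  "word_value b u = foldl (\<lambda>n a. n * b + a) 0 u"

lemma word_value_snoc [simp]: "word_value b (u @ [a]) = word_value b u * b + a"
  by (simp add: word_value_def)

lemma word_value_append:
  "word_value b (w @ u) = word_value b w * b ^ length u + word_value b u"
  by (induction u rule: rev_induct) (simp_all add: word_value_def algebra_simps)

lemma word_value_replicate_0 [simp]: "word_value b (replicate n 0) = 0"
  by (induction n) (simp_all add: word_value_def)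

lemma exists_word_with_value:
  assumes "0 < b" "v < b ^ L"
  shows "\<exists>u \<in> lists (alph b). length u = L \<and> word_value b u = v"
  using assms(2)
proof (induction L arbitrary: v)
  case 0
  then show ?case by (simp add: word_value_def)
next
  case (Suc L)
  have "v div b < b ^ L"
    using Suc.prems by (simp add: less_mult_imp_div_less mult.commute)
  then obtain u where u: "u \<in> lists (alph b)" "length u = L" "word_value b u = v div b"
    using Suc.IH by blast
  then have "u @ [v mod b] \<in> lists (alph b)" "word_value b (u @ [v mod b]) = v"
    using assms(1) by (simp_all add: alph_def)
  with u show ?case
    by (intro bexI[of _ "u @ [v mod b]"]) auto
qed

lemma runC_append: "runC b p I q (w @ u) = runC b p I (runC b p I q w) u"
  by (simp add: runC_def)

lemma runC_snoc: "runC b p I q (u @ [a]) = deltaC b p I (runC b p I q u) a"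
  by (simp add: runC_def)

lemma fst_runC:
  assumes "s < p"
  shows "fst (runC b p I (s, t) u) = (s * b ^ length u + word_value b u) mod p"
proof (induction u rule: rev_induct)
  case Nil
  then show ?case using assms by (simp add: runC_def word_value_def)
next
  case (snoc a u)
  have "fst (runC b p I (s, t) (u @ [a])) = (fst (runC b p I (s, t) u) * b + a) mod p"
    by (simp add: runC_snoc deltaC_def)
  also have "\<dots> = ((s * b ^ length u + word_value b u) * b + a) mod p"
    by (simp add: snoc) (metis mod_add_left_eq mod_mult_left_eq)
  finally show ?case by (simp add: algebra_simps)
qed

lemma snd_runC_None [simp]: "snd (runC b p I (s, None) u) = None"
  by (induction u rule: rev_induct) (simp_all add: runC_def deltaC_def deltaB_def)

lemma runC_None:
  "s < p \<Longrightarrow> runC b p I (s, None) u = ((s * b ^ length u + word_value b u) mod p, None)"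
  by (metis fst_runC prod.collapse snd_runC_None)

lemma snd_runC_initC:
  assumes "0 < b"
  shows "snd (runC b p I initC u) =
    (if word_value b u \<le> Max I then Some (word_value b u) else None)"
proof (induction u rule: rev_induct)
  case Nil
  then show ?case by (simp add: runC_def word_value_def initC_def)
next
  case (snoc a u)
  have "word_value b u \<le> word_value b (u @ [a])"
    using assms by (simp add: trans_le_add1)
  then show ?case
    using snoc by (auto simp: runC_snoc deltaC_def deltaB_def)
qed

lemma runC_initC:
  assumes "0 < b" "0 < p"
  shows "runC b p I initC u =
    (word_value b u mod p, if word_value b u \<le> Max I then Some (word_value b u) else None)"
  using fst_runC[of 0 p b I "Some 0" u] snd_runC_initC[OF assms(1), of p I u] assms(2)
  by (simp add: initC_def prod_eq_iff)

lemma finalC_runC_initC: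
  assumes "0 < b" "0 < p" "finite I"
  shows "finalC R I (runC b p I initC u) =
    ((word_value b u mod p \<in> R) \<noteq> (word_value b u \<in> I))"
  using assms by (auto simp: runC_initC finalC_def)

lemma nerode_equiv_sym: "nerode_equiv b p R I q q' \<Longrightarrow> nerode_equiv b p R I q' q"
  by (simp add: nerode_equiv_def)

lemma periodic_set_eq_mod:
  fixes p :: nat
  assumes "R \<subseteq> {0..<p}"
  shows "{r + p * n | r n. r \<in> R} = {x. x mod p \<in> R}"
proof (intro set_eqI iffI)
  fix x
  assume "x \<in> {r + p * n | r n. r \<in> R}"
  then show "x \<in> {x. x mod p \<in> R}"
    using assms by (auto simp: subset_eq)
next
  fix x
  assume "x \<in> {x. x mod p \<in> R}"
  moreover have "x = x mod p + p * (x div p)"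
    by simp
  ultimately show "x \<in> {r + p * n | r n. r \<in> R}"
    by blast
qed

lemma periodic_add_mult:
  fixes f :: "nat \<Rightarrow> 'a"
  assumes "\<And>x. f (x + a) = f x"
  shows "f (x + j * a) = f x"
  using assms by (induction j arbitrary: x) (simp_all add: add.assoc [symmetric])

lemma periodic_gcd:
  fixes f :: "nat \<Rightarrow> 'a"
  assumes "\<And>x. f (x + a) = f x" "\<And>x. f (x + c) = f x" "0 < a"
  shows "f (x + gcd a c) = f x"
proof -
  obtain i j where "a * i = c * j + gcd a c"
    using bezout_nat[of a c] assms(3) by auto
  then have shifted: "x + gcd a c + j * c = x + i * a"
    by (simp add: algebra_simps)
  have "f (x + gcd a c) = f (x + gcd a c + j * c)"
    by (rule periodic_add_mult[of f c, OF assms(2), symmetric])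
  also have "\<dots> = f x"
    unfolding shifted by (rule periodic_add_mult[of f a, OF assms(1)])
  finally show ?thesis .
qed

lemma proper_period_dvd:
  assumes proper: "proper p R I"
    and period: "\<And>x. ((x + \<delta>) mod p \<in> R) = (x mod p \<in> R)"
  shows "p dvd \<delta>"
proof -
  define f where "f x = (x mod p \<in> R)" for x
  define g where "g = gcd p \<delta>"
  have p: "0 < p" "R \<subseteq> {0..<p}" "finite I"
    using proper by (auto simp: proper_def)
  have g: "0 < g" "g dvd p" "g \<le> p"
    using p by (simp_all add: g_def dvd_imp_le)
  have g_period: "f (x + g) = f x" for x
    unfolding g_def by (rule periodic_gcd) (use p(1) period in \<open>simp_all add: f_def\<close>)
  have f_mod: "f x = f (x mod g)" for x
    using periodic_add_mult[of f g, OF g_period, of "x mod g" "x div g"] by simp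
  have "g = p"
  proof (rule ccontr)
    assume "g \<noteq> p"
    then have "g < p" using g by simp
    define R' where "R' = {r \<in> R. r < g}"
    have "x mod p \<in> R \<longleftrightarrow> x mod g \<in> R'" for x
      using f_mod[of x] mod_less_divisor[OF g(1)] order_less_trans[OF _ \<open>g < p\<close>]
      by (simp add: f_def R'_def)
    then have "perset p R I = perset g R' I"
      using periodic_set_eq_mod[OF p(2)] periodic_set_eq_mod[of R' g]
      by (simp add: perset_def R'_def subset_eq)
    moreover have "R' \<subseteq> {0..<g}"
      by (auto simp: R'_def)
    moreover have "\<not> (\<exists>R' I'. R' \<subseteq> {0..<g} \<and> finite I' \<and> perset p R I = perset g R' I')"
      using proper g(1) \<open>g < p\<close> by (simp add: proper_def)
    ultimately show False
      using p(3) by blast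
  qed
  then show ?thesis
    using gcd_dvd2[of p \<delta>] by (simp add: g_def)
qed

lemma proper_shift_mod_eq:
  assumes proper: "proper p R I"
    and shift: "\<And>x. ((c + x) mod p \<in> R) = ((c' + x) mod p \<in> R)"
  shows "c mod p = c' mod p"
proof -
  have p: "0 < p"
    using proper by (simp add: proper_def)
  have le_imp_eq: "a = a'"
    if "a \<le> a'" "a' < p" and same: "\<And>x. ((a + x) mod p \<in> R) = ((a' + x) mod p \<in> R)" for a a'
  proof -
    have "((x + (a' - a)) mod p \<in> R) = (x mod p \<in> R)" for x
    proof -
      have "a' + (x + p - a) = x + (a' - a) + p" "a + (x + p - a) = x + p"
        using that by simp_all
      then show ?thesis
        using same[of "x + p - a"] by (simp only: mod_add_self2)
    qed
    then have "p dvd a' - a"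
      by (rule proper_period_dvd[OF proper])
    then show ?thesis
      using that by (auto dest: dvd_imp_le)
  qed
  have "((c mod p + x) mod p \<in> R) = ((c' mod p + x) mod p \<in> R)" for x
    using shift[of x] by (simp add: mod_add_left_eq)
  then show ?thesis
    using le_imp_eq[of "c mod p" "c' mod p"] le_imp_eq[of "c' mod p" "c mod p"] p
    by (cases "c mod p \<le> c' mod p") auto
qed

lemma nerode_equiv_None_mod_eq:
  assumes proper: "proper p R I" and "0 < b" "s < p" "s' < p" "p \<le> b ^ L"
    and equiv: "nerode_equiv b p R I (s, None) (s', None)"
  shows "s * b ^ L mod p = s' * b ^ L mod p"
proof (rule proper_shift_mod_eq[OF proper])
  fix x
  have "0 < p"
    using proper by (simp add: proper_def)
  then have "x mod p < b ^ L"
    using assms(5) mod_less_divisor[of p x] by linarith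
  then obtain u where u: "u \<in> lists (alph b)" "length u = L" "word_value b u = x mod p"
    using exists_word_with_value assms(2) by blast
  have "finalC R I (runC b p I (s, None) u) = finalC R I (runC b p I (s', None) u)"
    using equiv u(1) by (simp add: nerode_equiv_def)
  then show "((s * b ^ L + x) mod p \<in> R) = ((s' * b ^ L + x) mod p \<in> R)"
    using u assms(3,4) by (simp add: runC_None finalC_def mod_add_right_eq)
qed

lemma not_nerode_equiv_initC:
  assumes proper: "proper p R I" and "1 < b" "I \<noteq> {}"
    and "q \<in> statesC b p I" "q \<noteq> initC"
  shows "\<not> nerode_equiv b p R I initC q"
proof
  assume equiv: "nerode_equiv b p R I initC q"
  have p: "0 < p" "finite I"
    using proper by (auto simp: proper_def)
  obtain w where w: "w \<in> lists (alph b)" "q = runC b p I initC w"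
    using assms(4) by (auto simp: statesC_def)
  define n where "n = word_value b w"
  define M where "M = Max I"
  define L where "L = M + p"
  define F where "F x = ((x mod p \<in> R) \<noteq> (x \<in> I))" for x
  have "n \<noteq> 0"
  proof
    assume "n = 0"
    then have "q = (0, Some 0)"
      using assms(2) p(1) w(2) by (simp add: runC_initC n_def)
    then show False
      using assms(5) by (simp add: initC_def)
  qed
  have translate: "F v = F (n * b ^ L + v)" if v: "v < b ^ L" for v
  proof -
    obtain u where u: "u \<in> lists (alph b)" "length u = L" "word_value b u = v"
      using exists_word_with_value[of b v L] v assms(2) by auto
    have "finalC R I (runC b p I initC u) = finalC R I (runC b p I initC (w @ u))"
      using equiv u(1) w(2) by (simp add: nerode_equiv_def runC_append)
    then show ?thesis
      using finalC_runC_initC[of b p I R] assms(2) p u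
      by (simp add: F_def word_value_append n_def)
  qed
  have "M + p < b ^ L"
    unfolding L_def using assms(2) by (simp add: power_gt_expt)
  moreover have "M < n * b ^ L + M"
    using \<open>n \<noteq> 0\<close> assms(2) by simp
  moreover have "M \<in> I" "\<And>x. x \<in> I \<Longrightarrow> x \<le> M"
    using assms(3) p(2) by (simp_all add: M_def)
  ultimately have "F M \<noteq> F (M + p)" "F (n * b ^ L + M) = F (n * b ^ L + M + p)"
    using p(1) by (fastforce simp: F_def)+
  then show False
    using translate[of M] translate[of "M + p"] \<open>M + p < b ^ L\<close>
    by (simp add: add.assoc)
qed

text \<open>
  On a 0-circuit the value of the accessed word is multiplied by b^N; in the second
  component this forces the value to be 0, i.e. the state to be initial.
\<close>

lemma zero_circuit_state_cases:
  assumes "1 < b" "0 < p" "q \<in> statesC b p I" "on_zero_circuit b p I q"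
  obtains "q = initC"
  | s N where "0 < N" "q = (s mod p, None)" "s * b ^ N mod p = s mod p"
proof -
  obtain w where w: "q = runC b p I initC w"
    using assms(3) by (auto simp: statesC_def)
  obtain N where N: "0 < N" "runC b p I q (replicate N 0) = q"
    using assms(4) by (auto simp: on_zero_circuit_def)
  define n where "n = word_value b w"
  have q: "q = (n mod p, if n \<le> Max I then Some n else None)"
    using assms(1,2) w by (simp add: runC_initC n_def)
  have "runC b p I initC (w @ replicate N 0) = q"
    using N(2) w by (simp add: runC_append)
  moreover have "word_value b (w @ replicate N 0) = n * b ^ N"
    by (simp add: word_value_append n_def)
  ultimately have shifted:
    "q = (n * b ^ N mod p, if n * b ^ N \<le> Max I then Some (n * b ^ N) else None)"
    using assms(1,2) runC_initC[of b p I "w @ replicate N 0"] by (simp cong: if_cong)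
  show thesis
  proof (cases "n \<le> Max I")
    case True
    then have "n * b ^ N = n"
      using q shifted by (auto split: if_splits)
    then have "n = 0"
      using assms(1) N(1) by simp
    then show thesis
      using q that(1) by (simp add: initC_def)
  next
    case False
    then show thesis
      using q shifted N(1) that(2) by simp
  qed
qed

lemma mult_power_mod_iterate:
  fixes s b p N :: nat
  assumes "s * b ^ N mod p = s mod p"
  shows "s * b ^ (N * j) mod p = s mod p"
proof (induction j)
  case (Suc j)
  have "s * b ^ (N * Suc j) = (s * b ^ N) * b ^ (N * j)"
    by (simp add: power_add algebra_simps)
  then have "s * b ^ (N * Suc j) mod p = (s * b ^ N mod p) * b ^ (N * j) mod p"
    by (metis mod_mult_left_eq)
  then show ?case
    using Suc assms by (simp add: mod_mult_left_eq)
qed simp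

lemma nerode_equiv_None_multiples_eq:
  assumes proper: "proper p R I" and "1 < b" "p = k * d" "coprime k b" "x < k" "x' < k"
    and equiv: "nerode_equiv b p R I (x * d, None) (x' * d, None)"
  shows "x = x'"
proof -
  have "0 < d" "p < b ^ p"
    using proper assms(2,3) by (auto simp: proper_def power_gt_expt)
  then have "x * d * b ^ p mod (k * d) = x' * d * b ^ p mod (k * d)"
    using nerode_equiv_None_mod_eq[OF proper _ _ _ _ equiv] assms(2,3,5,6) by simp
  then have "(x * b ^ p mod k) * d = (x' * b ^ p mod k) * d"
    by (simp add: mod_mult_mult2[symmetric] ac_simps)
  then have "[x * b ^ p = x' * b ^ p] (mod k)"
    using \<open>0 < d\<close> by (simp add: cong_def)
  then have "[x = x'] (mod k)"
    using assms(4) by (simp add: cong_mult_rcancel_nat coprime_commute)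
  then show ?thesis
    using assms(5,6) by (rule cong_less_modulus_unique_nat)
qed

lemma nerode_equiv_zero_circuit_eq:
  assumes proper: "proper p R I" and "1 < b" "I \<noteq> {}"
    and q: "q \<in> statesC b p I" "on_zero_circuit b p I q"
    and q': "q' \<in> statesC b p I" "on_zero_circuit b p I q'"
    and equiv: "nerode_equiv b p R I q q'"
  shows "q = q'"
proof -
  have p: "0 < p"
    using proper by (simp add: proper_def)
  show ?thesis
  proof (cases rule: zero_circuit_state_cases[OF assms(2) p q])
    case 1
    then show ?thesis
      using not_nerode_equiv_initC[OF proper assms(2,3) q'(1)] equiv by blast
  next
    case (2 s N)
    show ?thesis
    proof (cases rule: zero_circuit_state_cases[OF assms(2) p q'])
      case 1
      then show ?thesis
        using not_nerode_equiv_initC[OF proper assms(2,3) q(1)] nerode_equiv_sym[OF equiv]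
        by blast
    next
      case (2 s' N')
      define L where "L = N * N' * p"
      have "p \<le> L"
        using \<open>0 < N\<close> \<open>0 < N'\<close> by (simp add: L_def)
      have "p < b ^ p"
        using assms(2) by (simp add: power_gt_expt)
      also have "\<dots> \<le> b ^ L"
        using \<open>p \<le> L\<close> assms(2) by simp
      finally have "p \<le> b ^ L"
        by simp
      then have "(s mod p) * b ^ L mod p = (s' mod p) * b ^ L mod p"
        using nerode_equiv_None_mod_eq[OF proper] equiv q'(1) p assms(2) \<open>q = _\<close> 2
        by simp
      moreover have "s * b ^ L mod p = s mod p" "s' * b ^ L mod p = s' mod p"
        using mult_power_mod_iterate[of s b N p "N' * p"] mult_power_mod_iterate[of s' b N' p "N * p"]
          \<open>s * b ^ N mod p = s mod p\<close> 2
        by (simp_all add: L_def mult.assoc mult.left_commute)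
      ultimately show ?thesis
        using \<open>q = _\<close> 2 by (simp add: mod_mult_left_eq)
    qed
  qed
qed

theorem lemma39:
  fixes b p k d :: nat and R I :: "nat set"
  assumes "b > 1"
    and "proper p R I"
    and "I \<noteq> {}"
    and "k = (GREATEST k. k dvd p \<and> coprime k b)"
    and "d = p div k"
  shows "(\<forall>x x'. x < k \<and> x' < k \<and> x \<noteq> x' \<longrightarrow>
            \<not> nerode_equiv b p R I (x * d, None) (x' * d, None))
    \<and> (\<forall>q \<in> statesC b p I. \<forall>q' \<in> statesC b p I.
            on_zero_circuit b p I q \<and> on_zero_circuit b p I q' \<and> q \<noteq> q' \<longrightarrow>
            \<not> nerode_equiv b p R I q q')
    \<and> (\<forall>q \<in> statesC b p I. q \<noteq> initC \<longrightarrow> \<not> nerode_equiv b p R I initC q)"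
proof -
  have "0 < p"
    using assms(2) by (simp add: proper_def)
  then have "k dvd p \<and> coprime k b"
    unfolding assms(4) by (rule_tac GreatestI_nat[of _ 1 p]) (auto simp: dvd_imp_le)
  then have "p = k * d" "coprime k b"
    using assms(5) by simp_all
  then show ?thesis
    using nerode_equiv_None_multiples_eq[OF assms(2,1)] nerode_equiv_zero_circuit_eq[OF assms(2,1,3)]
      not_nerode_equiv_initC[OF assms(2,1,3)]
    by blast
qed

end
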